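(* Let the setting, algorithm and notation be as described in the context. For $(x,y,z)\in\mathcal X\times\mathcal Y\times\mathcal Z$ and $k\ge0$ write \[ \Gamma_{k}(x,y,z):=\big(p(x^{k+1})+q(y^{k+1})\big)-\big(p(x)+q(y)\big)+\langle x^{k+1}-x,\nabla f(x)+Az\rangle+\langle y^{k+1}-y,\nabla g(y)+Bz\rangle+\langle\tilde z^{k+1}-z,-(A^*x+B^*y-c)\rangle . \] (a) For every $k\ge0$ and $(x,y,z)\in\mathcal X\times\mathcal Y\times\mathcal Z$, \[ \Gamma_k(x,y,z)+\tfrac12\big(\phi_{k+1}(x,y,z)-\phi_k(x,y,z)\big)\le-\tfrac12\Big(s_{k+1}+(1-\tau)\sigma\|r^{k+1}\|^2+\sigma\|A^*x^{k+1}+B^*y^k-c\|^2\Big). \] (b) Assume moreover $\frac12\widehat\Sigma_g+T\succeq0$. Then for every $\alpha\in(0,1]$, every $k\ge1$ and every $(x,y,z)\in\mathcal X\times\mathcal Y\times\mathcal Z$, with $\kappa:=1-\alpha\min(\tau,\tau^{-1})$, \[ \Gamma_k(x,y,z)+\tfrac12\Big\{\big[\phi_{k+1}(x,y,z)+\kappa\sigma\|r^{k+1}\|^2+\alpha\xi_{k+1}\big]-\big[\phi_k(x,y,z)+\kappa\sigma\|r^k\|^2+\alpha\xi_k\big]\Big\}\le-\tfrac12\Big\{t_{k+1}+\big[-\tau+\alpha\min(1+\tau,1+\tau^{-1})\big]\sigma\|r^{k+1}\|^2\Big\}, \] where $t_{k+1}$ is defined with this $\alpha$.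
   Context: Let $\mathcal X,\mathcal Y,\mathcal Z$ be finite-dimensional real Euclidean spaces with inner products $\langle\cdot,\cdot\rangle$ and induced norms $\|\cdot\|$. Let $p:\mathcal X\to(-\infty,+\infty]$ and $q:\mathcal Y\to(-\infty,+\infty]$ be closed proper convex functions, and let $f:\mathcal X\to\mathbb R$, $g:\mathcal Y\to\mathbb R$ be convex differentiable functions with Lipschitz continuous gradients. Let $A:\mathcal Z\to\mathcal X$, $B:\mathcal Z\to\mathcal Y$ be linear maps with adjoints $A^*,B^*$, and $c\in\mathcal Z$. Let $\Sigma_f,\widehat\Sigma_f$ (on $\mathcal X$) and $\Sigma_g,\widehat\Sigma_g$ (on $\mathcal Y$) be self-adjoint positive semidefinite linear operators with $\widehat\Sigma_f\succeq\Sigma_f$, $\widehat\Sigma_g\succeq\Sigma_g$, such that for all $x,x'\in\mathcal X$, $y,y'\in\mathcal Y$: $f(x')+\langle x-x',\nabla f(x')\rangle+\frac12\|x-x'\|^2_{\Sigma_f}\le f(x)\le f(x')+\langle x-x',\nabla f(x')\rangle+\frac12\|x-x'\|^2_{\widehat\Sigma_f}$ and the analogous two inequalities for $g$ with $\Sigma_g,\widehat\Sigma_g$. For a self-adjoint (possibly indefinite) operator $G$, $\|u\|_G^2:=\langle u,Gu\rangle$. Algorithm (Majorized iPADMM): let $\sigma>0$, $\tau>0$, and let $S:\mathcal X\to\mathcal X$, $T:\mathcal Y\to\mathcal Y$ be self-adjoint, possibly indefinite, linear operators with $\widehat\Sigma_f+S+\sigma AA^*\succeq0$ and $\widehat\Sigma_g+T+\sigma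 BB^*\succeq0$. Starting from $(x^0,y^0,z^0)\in\mathrm{dom}(p)\times\mathrm{dom}(q)\times\mathcal Z$, for $k=0,1,\dots$: $x^{k+1}\in\arg\min_{x}\{p(x)+\langle\nabla f(x^k),x\rangle+\frac12\|x-x^k\|^2_{\widehat\Sigma_f+S}+\langle z^k,A^*x\rangle+\frac\sigma2\|A^*x+B^*y^k-c\|^2\}$, $y^{k+1}\in\arg\min_{y}\{q(y)+\langle\nabla g(y^k),y\rangle+\frac12\|y-y^k\|^2_{\widehat\Sigma_g+T}+\langle z^k,B^*y\rangle+\frac\sigma2\|A^*x^{k+1}+B^*y-c\|^2\}$, $z^{k+1}=z^k+\tau\sigma(A^*x^{k+1}+B^*y^{k+1}-c)$ (the minimizers are assumed to exist). Notation: $r^k:=A^*x^k+B^*y^k-c$, $\tilde z^{k+1}:=z^k+\sigma r^{k+1}$; for $\alpha\in(0,1]$, $H_f:=\frac12\Sigma_f+S+\frac12(1-\alpha)\sigma AA^*$ and $M_g:=\frac12\Sigma_g+T+\min(\tau,1+\tau-\tau^2)\alpha\sigma BB^*$; $\phi_k(x,y,z):=(\tau\sigma)^{-1}\|z^k-z\|^2+\|x^k-x\|^2_{\widehat\Sigma_f+S}+\|y^k-y\|^2_{\widehat\Sigma_g+T}+\sigma\|A^*x+B^*y^k-c\|^2$; $\xi_{k+1}:=\|y^{k+1}-y^k\|^2_{\widehat\Sigma_g+T}$; $s_{k+1}:=\|x^{k+1}-x^k\|^2_{\frac12\Sigma_f+S}+\|y^{k+1}-y^k\|^2_{\frac12\Sigma_g+T}$;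 $t_{k+1}:=\|x^{k+1}-x^k\|^2_{H_f}+\|y^{k+1}-y^k\|^2_{M_g}$. *)

theory Defs
  imports "HOL-Analysis.Analysis"
begin

definition qf :: "('a::real_inner \<Rightarrow> 'a) \<Rightarrow> 'a \<Rightarrow> real" where
  "qf G u = u \<bullet> G u"

definition self_adjoint_op :: "('a::real_inner \<Rightarrow> 'a) \<Rightarrow> bool" where
  "self_adjoint_op G \<longleftrightarrow> linear G \<and> (\<forall>u v. G u \<bullet> v = u \<bullet> G v)"

definition psd_op :: "('a::real_inner \<Rightarrow> 'a) \<Rightarrow> bool" where
  "psd_op G \<longleftrightarrow> (\<forall>u. 0 \<le> u \<bullet> G u)"

definition epi :: "('a \<Rightarrow> ereal) \<Rightarrow> ('a \<times> real) set" where
  "epi p = {(x, t). p x \<le> ereal t}"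

definition closed_proper_convex :: "('a::euclidean_space \<Rightarrow> ereal) \<Rightarrow> bool" where
  "closed_proper_convex p \<longleftrightarrow>
     (\<forall>x. p x \<noteq> -\<infinity>) \<and> (\<exists>x. p x \<noteq> \<infinity>) \<and> convex (epi p) \<and> closed (epi p)"

end

theory Submission
  imports Defs
begin

text \<open>
  The optimality condition of each subproblem (a variational inequality, obtained from convexity of
  p along segments), the majorization of f (a three-point estimate for the linearized gradient) and
  the three-point identity for the proximal term bound the x- and y-parts of Gamma_k.  The
  multiplier update z^{k+1} = z^k + tau sigma r^{k+1} turns the remaining inner products in Z into
  the telescoping differences of phi, which is (a).  For (b), the optimality conditions of two
  consecutive y-subproblems, tested at each other's minimizer, bound xi_{k+1} - xi_k by inner
  products with r^k and r^{k+1}; adding alpha times this estimate and (1 - alpha) times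
  ||A*(x^{k+1} - x^k)||^2 <= 2 ||A* x^{k+1} + B* y^k - c||^2 + 2 ||r^k||^2 to (a) gives (b).
\<close>

section \<open>Quadratic forms of self-adjoint operators\<close>

lemma self_adjoint_op_linear: "self_adjoint_op G \<Longrightarrow> linear G"
  by (simp add: self_adjoint_op_def)

lemma self_adjoint_op_commute: "self_adjoint_op G \<Longrightarrow> G u \<bullet> v = G v \<bullet> u"
  by (metis inner_commute self_adjoint_op_def)

lemma self_adjoint_op_add:
  "self_adjoint_op F \<Longrightarrow> self_adjoint_op G \<Longrightarrow> self_adjoint_op (\<lambda>u. F u + G u)"
  unfolding self_adjoint_op_def by (auto simp: inner_add_left inner_add_right intro: linear_compose_add)

lemma psd_op_qf_nonneg: "psd_op G \<Longrightarrow> 0 \<le> qf G u"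
  by (simp add: psd_op_def qf_def)

lemma qf_add_op: "qf (\<lambda>u. F u + G u) w = qf F w + qf G w"
  by (simp add: qf_def inner_add_right)

lemma qf_scaleR_op: "qf (\<lambda>u. a *\<^sub>R F u) w = a * qf F w"
  by (simp add: qf_def)

lemma qf_adjoint_op:
  fixes A :: "'z::euclidean_space \<Rightarrow> 'x::euclidean_space"
  assumes "linear A"
  shows "qf (\<lambda>u. A (adjoint A u)) w = (norm (adjoint A w))\<^sup>2"
  by (simp add: qf_def adjoint_clauses(2)[OF assms] power2_norm_eq_inner)

lemma qf_scaleR: "linear G \<Longrightarrow> qf G (a *\<^sub>R u) = a\<^sup>2 * qf G u"
  by (simp add: qf_def linear_scale power2_eq_square)

lemma qf_minus: "linear G \<Longrightarrow> qf G (- u) = qf G u"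
  using qf_scaleR[of G "-1" u] by simp

lemma qf_add:
  assumes "self_adjoint_op G"
  shows "qf G (u + v) = qf G u + qf G v + 2 * (G u \<bullet> v)"
  using self_adjoint_op_commute[OF assms, of v u] self_adjoint_op_linear[OF assms]
  by (simp add: qf_def linear_add inner_add_left inner_add_right inner_commute)

lemma qf_diff:
  assumes "self_adjoint_op G"
  shows "qf G (u - v) = qf G u + qf G v - 2 * (G u \<bullet> v)"
  using qf_add[OF assms, of u "- v"] qf_minus[OF self_adjoint_op_linear[OF assms]] by simp

lemma qf_parallelogram:
  assumes "self_adjoint_op G"
  shows "qf G (u + v) + qf G (u - v) = 2 * qf G u + 2 * qf G v"
  using qf_add[OF assms, of u v] qf_diff[OF assms, of u v] by simp

lemma qf_add_scaleR:
  assumes "self_adjoint_op G"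
  shows "qf G (u + t *\<^sub>R d) = qf G u + 2 * t * (G u \<bullet> d) + t\<^sup>2 * qf G d"
  using qf_add[OF assms] qf_scaleR[OF self_adjoint_op_linear[OF assms]] by simp

lemma qf_three_point:
  assumes "self_adjoint_op G"
  shows "2 * (G (b - a) \<bullet> (x - b)) = qf G (a - x) - qf G (b - x) - qf G (b - a)"
  using qf_diff[OF assms, of "b - x" "b - a"] self_adjoint_op_linear[OF assms]
    self_adjoint_op_commute[OF assms, of b a] self_adjoint_op_commute[OF assms, of x a]
    self_adjoint_op_commute[OF assms, of x b]
  by (simp add: linear_diff inner_diff_right inner_diff_left)

lemma norm_add_scaleR_power2:
  fixes a b :: "'a::real_inner"
  shows "(norm (a + t *\<^sub>R b))\<^sup>2 = (norm a)\<^sup>2 + 2 * t * (a \<bullet> b) + t\<^sup>2 * (norm b)\<^sup>2"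
  unfolding power2_norm_eq_inner inner_add_left inner_add_right inner_scaleR_left inner_scaleR_right
  by (simp add: inner_commute power2_eq_square algebra_simps)

lemma norm_diff_power2_le:
  fixes a b :: "'a::real_inner"
  shows "(norm (a - b))\<^sup>2 \<le> 2 * (norm a)\<^sup>2 + 2 * (norm b)\<^sup>2"
  using norm_add_scaleR_power2[of a "-1" b] norm_add_scaleR_power2[of a 1 b]
    zero_le_power2[of "norm (a + b)"] by simp

section \<open>Proximal steps with a majorized smooth part\<close>

lemma nonneg_if_nonneg_on_segment:
  fixes V C :: real
  assumes "\<And>t. 0 < t \<Longrightarrow> t \<le> 1 \<Longrightarrow> 0 \<le> t * V + t\<^sup>2 * C"
  shows "0 \<le> V"
proof (rule tendsto_lowerbound)
  show "((\<lambda>t. V + t * C) \<longlongrightarrow> V) (at_right 0)"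
    by (auto intro!: tendsto_eq_intros)
  have "0 \<le> V + t * C" if "0 < t" "t < 1" for t
  proof -
    have "0 \<le> t * (V + t * C)"
      using assms[of t] that by (simp add: power2_eq_square algebra_simps)
    with \<open>0 < t\<close> show ?thesis
      by (simp add: zero_le_mult_iff)
  qed
  then show "eventually (\<lambda>t. 0 \<le> V + t * C) (at_right 0)"
    unfolding eventually_at_right[OF zero_less_one] by (intro exI[of _ 1]) auto
qed simp

lemma convex_epi_le:
  assumes "convex (epi p)" and "p x = ereal P" and "p y = ereal Q" and "0 \<le> t" and "t \<le> 1"
  shows "p ((1 - t) *\<^sub>R x + t *\<^sub>R y) \<le> ereal ((1 - t) * P + t * Q)"
proof -
  have "(x, P) \<in> epi p" "(y, Q) \<in> epi p"
    using assms(2,3) by (simp_all add: epi_def)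
  then have "(1 - t) *\<^sub>R (x, P) + t *\<^sub>R (y, Q) \<in> epi p"
    using assms(4,5) by (intro convexD_alt[OF assms(1)])
  then show ?thesis
    by (simp add: epi_def)
qed

lemma prox_minimizer_vi:
  fixes p :: "'a::euclidean_space \<Rightarrow> ereal" and M :: "'a \<Rightarrow> 'b::euclidean_space"
  assumes p_convex: "convex (epi p)" and p_proper: "\<And>x. p x \<noteq> -\<infinity>"
    and G: "self_adjoint_op G" and M: "linear M"
    and min: "\<And>x. p x1 + ereal (v \<bullet> x1 + 1/2 * qf G (x1 - x0) + z \<bullet> M x1 + \<sigma>/2 * (norm (M x1 + w))\<^sup>2)
                  \<le> p x + ereal (v \<bullet> x + 1/2 * qf G (x - x0) + z \<bullet> M x + \<sigma>/2 * (norm (M x + w))\<^sup>2)"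
    and finite: "p x \<noteq> \<infinity>"
  shows "p x1 \<noteq> \<infinity>"
    and "0 \<le> real_of_ereal (p x) - real_of_ereal (p x1) + (v + G (x1 - x0)) \<bullet> (x - x1)
             + (z + \<sigma> *\<^sub>R (M x1 + w)) \<bullet> M (x - x1)"
proof -
  define h where "h x = v \<bullet> x + 1/2 * qf G (x - x0) + z \<bullet> M x + \<sigma>/2 * (norm (M x + w))\<^sup>2" for x
  obtain P where P: "p x = ereal P"
    using finite p_proper by (cases "p x") auto
  have "p x1 + ereal (h x1) \<le> ereal (P + h x)"
    using min[of x] by (simp add: h_def P)
  then show "p x1 \<noteq> \<infinity>"
    by auto
  then obtain P1 where P1: "p x1 = ereal P1"
    using p_proper by (cases "p x1") auto
  define d where "d = x - x1"
  define V where "V = (v + G (x1 - x0)) \<bullet> d + (z + \<sigma> *\<^sub>R (M x1 + w)) \<bullet> M d"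
  define C where "C = 1/2 * qf G d + \<sigma>/2 * (norm (M d))\<^sup>2"
  have "0 \<le> t * (P - P1 + V) + t\<^sup>2 * C" if t: "0 < t" "t \<le> 1" for t
  proof -
    have "x1 + t *\<^sub>R d = (1 - t) *\<^sub>R x1 + t *\<^sub>R x"
      by (simp add: d_def algebra_simps)
    then have convex_ineq: "p (x1 + t *\<^sub>R d) \<le> ereal ((1 - t) * P1 + t * P)"
      using convex_epi_le[OF p_convex P1 P, of t] t by simp
    have shift: "x1 + t *\<^sub>R d - x0 = (x1 - x0) + t *\<^sub>R d"
      "M (x1 + t *\<^sub>R d) + w = (M x1 + w) + t *\<^sub>R M d"
      using M by (simp_all add: linear_add linear_scale algebra_simps)
    have h_expand: "h (x1 + t *\<^sub>R d) = h x1 + t * V + t\<^sup>2 * C"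
      using M unfolding h_def shift qf_add_scaleR[OF G] norm_add_scaleR_power2
      by (simp add: V_def C_def linear_add linear_scale algebra_simps power2_eq_square)
    have "ereal (P1 + h x1) \<le> p (x1 + t *\<^sub>R d) + ereal (h (x1 + t *\<^sub>R d))"
      using min[of "x1 + t *\<^sub>R d"] by (simp add: h_def P1)
    also have "\<dots> \<le> ereal ((1 - t) * P1 + t * P) + ereal (h (x1 + t *\<^sub>R d))"
      using convex_ineq by (rule add_right_mono)
    finally show ?thesis
      by (simp add: h_expand algebra_simps)
  qed
  then have "0 \<le> P - P1 + V"
    by (rule nonneg_if_nonneg_on_segment)
  then show "0 \<le> real_of_ereal (p x) - real_of_ereal (p x1) + (v + G (x1 - x0)) \<bullet> (x - x1)
             + (z + \<sigma> *\<^sub>R (M x1 + w)) \<bullet> M (x - x1)"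
    by (simp add: P P1 V_def d_def)
qed

locale majorized_fun =
  fixes f :: "'a::euclidean_space \<Rightarrow> real" and gf :: "'a \<Rightarrow> 'a" and Sf Shf :: "'a \<Rightarrow> 'a"
  assumes bounds: "\<And>x x'. f x' + (x - x') \<bullet> gf x' + 1/2 * qf Sf (x - x') \<le> f x
                         \<and> f x \<le> f x' + (x - x') \<bullet> gf x' + 1/2 * qf Shf (x - x')"
    and Sf_sa: "self_adjoint_op Sf" and Sf_psd: "psd_op Sf" and Shf_sa: "self_adjoint_op Shf"
begin

lemma lower: "f y + (x - y) \<bullet> gf y + 1/2 * qf Sf (x - y) \<le> f x"
  using bounds by blast

lemma upper: "f x \<le> f y + (x - y) \<bullet> gf y + 1/2 * qf Shf (x - y)"
  using bounds by blast

lemma grad_three_point: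
  "gf x \<bullet> (x1 - x) \<le> gf x0 \<bullet> (x1 - x) + 1/2 * qf Shf (x1 - x0) - 1/4 * qf Sf (x1 - x0)"
proof -
  have "qf Sf ((x - x0) + (x1 - x)) + qf Sf ((x - x0) - (x1 - x))
      = 2 * qf Sf (x - x0) + 2 * qf Sf (x1 - x)"
    by (rule qf_parallelogram[OF Sf_sa])
  moreover have "0 \<le> qf Sf ((x - x0) - (x1 - x))"
    using Sf_psd by (rule psd_op_qf_nonneg)
  ultimately have "qf Sf (x1 - x0) \<le> 2 * qf Sf (x - x0) + 2 * qf Sf (x1 - x)"
    by simp
  moreover have "(x1 - x0) \<bullet> gf x0 = (x - x0) \<bullet> gf x0 + (x1 - x) \<bullet> gf x0"
    by (simp add: inner_diff_left)
  ultimately show ?thesis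
    using lower[where x = x and y = x0] upper[where x = x1 and y = x0] lower[where x = x1 and y = x]
    by (simp add: inner_commute)
qed

lemma grad_cocoercive: "2 * ((gf b - gf a) \<bullet> u) - qf Shf u \<le> (gf b - gf a) \<bullet> (b - a)"
proof -
  have "0 \<le> qf Sf (b - u - a)" "0 \<le> qf Sf (a + u - b)"
    using Sf_psd by (simp_all add: psd_op_qf_nonneg)
  moreover have "qf Shf (b - u - b) = qf Shf u"
    using qf_minus[OF self_adjoint_op_linear[OF Shf_sa]] by simp
  moreover have "(b - u - a) \<bullet> gf a = (b - a) \<bullet> gf a - u \<bullet> gf a"
    "(b - u - b) \<bullet> gf b = - (u \<bullet> gf b)"
    "(a + u - b) \<bullet> gf b = u \<bullet> gf b - (b - a) \<bullet> gf b"
    "(gf b - gf a) \<bullet> u = u \<bullet> gf b - u \<bullet> gf a"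
    "(gf b - gf a) \<bullet> (b - a) = (b - a) \<bullet> gf b - (b - a) \<bullet> gf a"
    by (simp_all add: inner_diff_left inner_add_left inner_diff_right inner_add_right inner_commute)
  ultimately show ?thesis
    using lower[where x = "b - u" and y = a] upper[where x = "b - u" and y = b]
      lower[where x = "a + u" and y = b] upper[where x = "a + u" and y = a]
    unfolding add_diff_cancel_left' by linarith
qed

lemma grad_diff_lower: "- 1/4 * qf Shf ((c - b) - (b - a)) \<le> (gf b - gf a) \<bullet> (c - b)"
proof -
  define e where "e = (c - b) - (b - a)"
  have "qf Shf ((- 1/2) *\<^sub>R e) = 1/4 * qf Shf e"
    using qf_scaleR[OF self_adjoint_op_linear[OF Shf_sa], of "- 1/2" e] by (simp add: power2_eq_square)
  moreover have "(gf b - gf a) \<bullet> (c - b) = (gf b - gf a) \<bullet> (b - a) + (gf b - gf a) \<bullet> e"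
    by (simp add: e_def inner_diff_right)
  ultimately show ?thesis
    using grad_cocoercive[of b a "(- 1/2) *\<^sub>R e"] by (simp add: e_def[symmetric])
qed

lemma prox_linearized_step_descent:
  fixes p :: "'a \<Rightarrow> ereal" and S :: "'a \<Rightarrow> 'a" and M :: "'a \<Rightarrow> 'b::euclidean_space"
  defines "G \<equiv> \<lambda>u. Shf u + S u"
  assumes p_convex: "convex (epi p)" and p_proper: "\<And>x. p x \<noteq> -\<infinity>"
    and S_sa: "self_adjoint_op S" and M: "linear M"
    and min: "\<And>x. p x1 + ereal (gf x0 \<bullet> x1 + 1/2 * qf G (x1 - x0) + z \<bullet> M x1 + \<sigma>/2 * (norm (M x1 + w))\<^sup>2)
                  \<le> p x + ereal (gf x0 \<bullet> x + 1/2 * qf G (x - x0) + z \<bullet> M x + \<sigma>/2 * (norm (M x + w))\<^sup>2)"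
    and finite: "p x \<noteq> \<infinity>"
  shows "p x1 \<noteq> \<infinity>"
    and "real_of_ereal (p x1) - real_of_ereal (p x) + gf x \<bullet> (x1 - x)
           + 1/2 * (qf G (x1 - x) - qf G (x0 - x))
         \<le> (z + \<sigma> *\<^sub>R (M x1 + w)) \<bullet> M (x - x1) - 1/2 * qf (\<lambda>u. (1/2) *\<^sub>R Sf u + S u) (x1 - x0)"
proof -
  have G_sa: "self_adjoint_op G"
    unfolding G_def by (rule self_adjoint_op_add[OF Shf_sa S_sa])
  note vi = prox_minimizer_vi[OF p_convex p_proper G_sa M min finite]
  show "p x1 \<noteq> \<infinity>"
    by (rule vi(1))
  have "2 * (G (x1 - x0) \<bullet> (x - x1)) = qf G (x0 - x) - qf G (x1 - x) - qf G (x1 - x0)"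
    by (rule qf_three_point[OF G_sa])
  moreover have "qf G (x1 - x0) = qf Shf (x1 - x0) + qf S (x1 - x0)"
    unfolding G_def by (rule qf_add_op)
  moreover have "gf x0 \<bullet> (x1 - x) = - (gf x0 \<bullet> (x - x1))"
    by (simp add: inner_diff_right)
  ultimately show "real_of_ereal (p x1) - real_of_ereal (p x) + gf x \<bullet> (x1 - x)
           + 1/2 * (qf G (x1 - x) - qf G (x0 - x))
         \<le> (z + \<sigma> *\<^sub>R (M x1 + w)) \<bullet> M (x - x1) - 1/2 * qf (\<lambda>u. (1/2) *\<^sub>R Sf u + S u) (x1 - x0)"
    using vi(2) grad_three_point[of x x1 x0]
    by (simp add: qf_add_op qf_scaleR_op inner_add_left ring_distribs)
qed

end

section \<open>Estimates for the multiplier and the residuals\<close>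

lemma inner_cross_bound:
  fixes R D :: "'a::real_inner"
  assumes "\<tau> > 0"
  shows "2 * (1 - \<tau>) * (R \<bullet> D)
         \<le> (1 - min \<tau> (1 / \<tau>)) * (norm R)\<^sup>2 + (1 - min \<tau> (1 + \<tau> - \<tau>\<^sup>2)) * (norm D)\<^sup>2"
proof (cases "\<tau> \<le> 1")
  case True
  then have "min \<tau> (1 / \<tau>) = \<tau>" "min \<tau> (1 + \<tau> - \<tau>\<^sup>2) = \<tau>"
    using assms by (auto simp: min_def field_simps power2_eq_square mult_le_one)
  moreover have "0 \<le> (1 - \<tau>) * (norm (R + (-1) *\<^sub>R D))\<^sup>2"
    using True by simp
  ultimately show ?thesis
    unfolding norm_add_scaleR_power2 by (simp add: algebra_simps)
next
  case False
  then have "1 < \<tau> * \<tau>"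
    by (intro less_1_mult) auto
  with False have "min \<tau> (1 / \<tau>) = 1 / \<tau>" "min \<tau> (1 + \<tau> - \<tau>\<^sup>2) = 1 + \<tau> - \<tau>\<^sup>2"
    by (auto simp: min_def field_simps power2_eq_square)
  moreover have "0 \<le> (\<tau> - 1) / \<tau> * (norm (R + \<tau> *\<^sub>R D))\<^sup>2"
    using False by simp
  ultimately show ?thesis
    unfolding norm_add_scaleR_power2 using assms by (simp add: field_simps power2_eq_square)
qed

text \<open>In the application u, v, a, b, b', w stand for A* x, B* y, A* x^{k+1}, B* y^k, B* y^{k+1}, z^k.\<close>

lemma multiplier_identity:
  fixes u v a b b' c w z :: "'z::real_inner"
  assumes "\<tau> * \<sigma> \<noteq> 0"
  shows "z \<bullet> (a - u) + z \<bullet> (b' - v) + (w + \<sigma> *\<^sub>R (a + b' - c) - z) \<bullet> (- (u + v - c))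
      + (w + \<sigma> *\<^sub>R (a + b - c)) \<bullet> (u - a) + (w + \<sigma> *\<^sub>R (a + b' - c)) \<bullet> (v - b')
      + 1/2 * (1 / (\<tau> * \<sigma>) * (norm (w + (\<tau> * \<sigma>) *\<^sub>R (a + b' - c) - z))\<^sup>2
               - 1 / (\<tau> * \<sigma>) * (norm (w - z))\<^sup>2 + \<sigma> * (norm (u + b' - c))\<^sup>2 - \<sigma> * (norm (u + b - c))\<^sup>2)
    = - 1/2 * ((1 - \<tau>) * \<sigma> * (norm (a + b' - c))\<^sup>2 + \<sigma> * (norm (a + b - c))\<^sup>2)"
proof -
  have shift: "w + (\<tau> * \<sigma>) *\<^sub>R (a + b' - c) - z = (w - z) + (\<tau> * \<sigma>) *\<^sub>R (a + b' - c)"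
    by simp
  have zdiff: "1 / (\<tau> * \<sigma>) * (norm (w + (\<tau> * \<sigma>) *\<^sub>R (a + b' - c) - z))\<^sup>2 - 1 / (\<tau> * \<sigma>) * (norm (w - z))\<^sup>2
      = 2 * ((w - z) \<bullet> (a + b' - c)) + \<tau> * \<sigma> * (norm (a + b' - c))\<^sup>2"
    unfolding shift norm_add_scaleR_power2 using assms by (simp add: field_simps power2_eq_square)
  show ?thesis
    unfolding diff_add_eq[symmetric] zdiff power2_norm_eq_inner using assms
    by (simp add: inner_commute algebra_simps)
qed

section \<open>The majorized iPADMM\<close>

locale majorized_ipadmm =
  fx: majorized_fun f gf Sf Shf + gy: majorized_fun g gg Sg Shg
  for f :: "'x::euclidean_space \<Rightarrow> real" and gf Sf Shf
    and g :: "'y::euclidean_space \<Rightarrow> real" and gg Sg Shg +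
  fixes p :: "'x \<Rightarrow> ereal" and q :: "'y \<Rightarrow> ereal"
    and A :: "'z::euclidean_space \<Rightarrow> 'x" and B :: "'z \<Rightarrow> 'y" and c :: 'z
    and S :: "'x \<Rightarrow> 'x" and T :: "'y \<Rightarrow> 'y" and \<sigma> \<tau> :: real
    and xs :: "nat \<Rightarrow> 'x" and ys :: "nat \<Rightarrow> 'y" and zs :: "nat \<Rightarrow> 'z"
  assumes p_cpc: "closed_proper_convex p" and q_cpc: "closed_proper_convex q"
    and S_sa: "self_adjoint_op S" and T_sa: "self_adjoint_op T"
    and A_lin: "linear A" and B_lin: "linear B"
    and sigma_pos: "\<sigma> > 0" and tau_pos: "\<tau> > 0"
    and x_step: "\<And>k x. p (xs (Suc k)) + ereal (gf (xs k) \<bullet> xs (Suc k)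
              + 1/2 * qf (\<lambda>u. Shf u + S u) (xs (Suc k) - xs k) + zs k \<bullet> adjoint A (xs (Suc k))
              + \<sigma>/2 * (norm (adjoint A (xs (Suc k)) + adjoint B (ys k) - c))\<^sup>2)
            \<le> p x + ereal (gf (xs k) \<bullet> x + 1/2 * qf (\<lambda>u. Shf u + S u) (x - xs k)
              + zs k \<bullet> adjoint A x + \<sigma>/2 * (norm (adjoint A x + adjoint B (ys k) - c))\<^sup>2)"
    and y_step: "\<And>k y. q (ys (Suc k)) + ereal (gg (ys k) \<bullet> ys (Suc k)
              + 1/2 * qf (\<lambda>u. Shg u + T u) (ys (Suc k) - ys k) + zs k \<bullet> adjoint B (ys (Suc k))
              + \<sigma>/2 * (norm (adjoint A (xs (Suc k)) + adjoint B (ys (Suc k)) - c))\<^sup>2)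
            \<le> q y + ereal (gg (ys k) \<bullet> y + 1/2 * qf (\<lambda>u. Shg u + T u) (y - ys k)
              + zs k \<bullet> adjoint B y + \<sigma>/2 * (norm (adjoint A (xs (Suc k)) + adjoint B y - c))\<^sup>2)"
    and z_step: "\<And>k. zs (Suc k) = zs k + (\<tau> * \<sigma>) *\<^sub>R (adjoint A (xs (Suc k)) + adjoint B (ys (Suc k)) - c)"
begin

lemma p_convex: "convex (epi p)" and p_proper: "\<And>x. p x \<noteq> -\<infinity>" "\<exists>x. p x \<noteq> \<infinity>"
  using p_cpc by (simp_all add: closed_proper_convex_def)

lemma q_convex: "convex (epi q)" and q_proper: "\<And>y. q y \<noteq> -\<infinity>" "\<exists>y. q y \<noteq> \<infinity>"
  using q_cpc by (simp_all add: closed_proper_convex_def)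

definition r :: "nat \<Rightarrow> 'z" where
  "r k = adjoint A (xs k) + adjoint B (ys k) - c"

lemma x_step_descent:
  assumes "p x \<noteq> \<infinity>"
  shows "p (xs (Suc k)) \<noteq> \<infinity>"
    and "real_of_ereal (p (xs (Suc k))) - real_of_ereal (p x) + gf x \<bullet> (xs (Suc k) - x)
           + 1/2 * (qf (\<lambda>u. Shf u + S u) (xs (Suc k) - x) - qf (\<lambda>u. Shf u + S u) (xs k - x))
         \<le> (zs k + \<sigma> *\<^sub>R (adjoint A (xs (Suc k)) + adjoint B (ys k) - c)) \<bullet> adjoint A (x - xs (Suc k))
           - 1/2 * qf (\<lambda>u. (1/2) *\<^sub>R Sf u + S u) (xs (Suc k) - xs k)"
  using fx.prox_linearized_step_descent[OF p_convex p_proper(1) S_sa adjoint_linear[OF A_lin]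
      x_step[unfolded add_diff_eq[symmetric]] assms]
  by (simp_all add: add_diff_eq)

lemma y_penalty_reassoc:
  "adjoint A (xs (Suc k)) + adjoint B y - c = adjoint B y + (adjoint A (xs (Suc k)) - c)"
  by (simp add: algebra_simps)

lemma y_step_vi:
  assumes "q y \<noteq> \<infinity>"
  shows "0 \<le> real_of_ereal (q y) - real_of_ereal (q (ys (Suc k)))
             + (gg (ys k) + Shg (ys (Suc k) - ys k) + T (ys (Suc k) - ys k)) \<bullet> (y - ys (Suc k))
             + (zs k + \<sigma> *\<^sub>R r (Suc k)) \<bullet> adjoint B (y - ys (Suc k))"
  using prox_minimizer_vi(2)[OF q_convex q_proper(1) self_adjoint_op_add[OF gy.Shf_sa T_sa]
      adjoint_linear[OF B_lin] y_step[unfolded y_penalty_reassoc] assms]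
  by (simp add: r_def algebra_simps)

lemma y_step_descent:
  assumes "q y \<noteq> \<infinity>"
  shows "q (ys (Suc k)) \<noteq> \<infinity>"
    and "real_of_ereal (q (ys (Suc k))) - real_of_ereal (q y) + gg y \<bullet> (ys (Suc k) - y)
           + 1/2 * (qf (\<lambda>u. Shg u + T u) (ys (Suc k) - y) - qf (\<lambda>u. Shg u + T u) (ys k - y))
         \<le> (zs k + \<sigma> *\<^sub>R r (Suc k)) \<bullet> adjoint B (y - ys (Suc k))
           - 1/2 * qf (\<lambda>u. (1/2) *\<^sub>R Sg u + T u) (ys (Suc k) - ys k)"
  using gy.prox_linearized_step_descent[OF q_convex q_proper(1) T_sa adjoint_linear[OF B_lin]
      y_step[unfolded y_penalty_reassoc] assms]
  by (simp_all add: r_def algebra_simps)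

lemma p_iterate_finite: "p (xs (Suc k)) \<noteq> \<infinity>"
  using x_step_descent(1) p_proper(2) by blast

lemma q_iterate_finite: "q (ys (Suc k)) \<noteq> \<infinity>"
  using y_step_descent(1) q_proper(2) by blast

definition \<Gamma> :: "nat \<Rightarrow> 'x \<Rightarrow> 'y \<Rightarrow> 'z \<Rightarrow> ereal" where
  "\<Gamma> k x y z = (p (xs (Suc k)) + q (ys (Suc k))) - (p x + q y)
     + ereal ((xs (Suc k) - x) \<bullet> (gf x + A z) + (ys (Suc k) - y) \<bullet> (gg y + B z)
              + (zs k + \<sigma> *\<^sub>R r (Suc k) - z) \<bullet> (- (adjoint A x + adjoint B y - c)))"

text \<open>Since real_of_ereal is junk at infinity, Gamma_real agrees with Gamma only where p x and q y
  are finite; Gamma_le_ereal shows that this is the only case that matters.\<close>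

definition \<Gamma>_real :: "nat \<Rightarrow> 'x \<Rightarrow> 'y \<Rightarrow> 'z \<Rightarrow> real" where
  "\<Gamma>_real k x y z = real_of_ereal (p (xs (Suc k))) + real_of_ereal (q (ys (Suc k)))
     - (real_of_ereal (p x) + real_of_ereal (q y))
     + ((xs (Suc k) - x) \<bullet> (gf x + A z) + (ys (Suc k) - y) \<bullet> (gg y + B z)
        + (zs k + \<sigma> *\<^sub>R r (Suc k) - z) \<bullet> (- (adjoint A x + adjoint B y - c)))"

lemma \<Gamma>_le_ereal:
  assumes "p x \<noteq> \<infinity> \<Longrightarrow> q y \<noteq> \<infinity> \<Longrightarrow> \<Gamma>_real k x y z + a \<le> b"
  shows "\<Gamma> k x y z + ereal a \<le> ereal b"
proof -
  obtain P1 Q1 where P1: "p (xs (Suc k)) = ereal P1" and Q1: "q (ys (Suc k)) = ereal Q1"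
    using p_iterate_finite p_proper(1) q_iterate_finite q_proper(1) by (meson ereal_cases)
  show ?thesis
  proof (cases "p x = \<infinity> \<or> q y = \<infinity>")
    case True
    then have infinite: "p x + q y = \<infinity>"
      using p_proper(1) q_proper(1) by (metis ereal_plus_eq_PInfty)
    show ?thesis
      unfolding \<Gamma>_def P1 Q1 infinite by simp
  next
    case False
    then obtain P Q where "p x = ereal P" "q y = ereal Q"
      using p_proper(1) q_proper(1) by (meson ereal_cases)
    with False assms show ?thesis
      by (simp add: \<Gamma>_def \<Gamma>_real_def P1 Q1)
  qed
qed

definition \<phi> :: "nat \<Rightarrow> 'x \<Rightarrow> 'y \<Rightarrow> 'z \<Rightarrow> real" where
  "\<phi> k x y z = 1 / (\<tau> * \<sigma>) * (norm (zs k - z))\<^sup>2 + qf (\<lambda>u. Shf u + S u) (xs k - x)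
     + qf (\<lambda>u. Shg u + T u) (ys k - y) + \<sigma> * (norm (adjoint A x + adjoint B (ys k) - c))\<^sup>2"

definition s :: "nat \<Rightarrow> real" where
  "s k = qf (\<lambda>u. (1/2) *\<^sub>R Sf u + S u) (xs k - xs (k - 1))
     + qf (\<lambda>u. (1/2) *\<^sub>R Sg u + T u) (ys k - ys (k - 1))"

lemma \<Gamma>_real_descent:
  assumes "p x \<noteq> \<infinity>" and "q y \<noteq> \<infinity>"
  shows "\<Gamma>_real k x y z + 1/2 * (\<phi> (Suc k) x y z - \<phi> k x y z)
    \<le> - 1/2 * (s (Suc k) + (1 - \<tau>) * \<sigma> * (norm (r (Suc k)))\<^sup>2
               + \<sigma> * (norm (adjoint A (xs (Suc k)) + adjoint B (ys k) - c))\<^sup>2)"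
proof -
  have adjoint_diff: "adjoint A (x - xs (Suc k)) = adjoint A x - adjoint A (xs (Suc k))"
    "adjoint B (y - ys (Suc k)) = adjoint B y - adjoint B (ys (Suc k))"
    by (simp_all add: linear_diff adjoint_linear A_lin B_lin)
  have adjoint_pairing: "(xs (Suc k) - x) \<bullet> A z = z \<bullet> (adjoint A (xs (Suc k)) - adjoint A x)"
    "(ys (Suc k) - y) \<bullet> B z = z \<bullet> (adjoint B (ys (Suc k)) - adjoint B y)"
    using adjoint_clauses(1)[OF A_lin, of z "xs (Suc k) - x"]
      adjoint_clauses(1)[OF B_lin, of z "ys (Suc k) - y"]
    by (simp_all add: linear_diff adjoint_linear A_lin B_lin inner_commute)
  have "\<tau> * \<sigma> \<noteq> 0"
    using tau_pos sigma_pos by simp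
  note multiplier = multiplier_identity[OF this, where u = "adjoint A x" and v = "adjoint B y"
      and a = "adjoint A (xs (Suc k))" and b = "adjoint B (ys k)" and b' = "adjoint B (ys (Suc k))"
      and w = "zs k" and c = c and z = z]
  show ?thesis
    using x_step_descent(2)[OF assms(1), of k] y_step_descent(2)[OF assms(2), of k] multiplier
      adjoint_pairing inner_commute[of "xs (Suc k) - x" "gf x"] inner_commute[of "ys (Suc k) - y" "gg y"]
    unfolding \<Gamma>_real_def \<phi>_def s_def z_step r_def adjoint_diff inner_add_right diff_Suc_1
    by argo
qed

definition \<xi> :: "nat \<Rightarrow> real" where
  "\<xi> k = qf (\<lambda>u. Shg u + T u) (ys k - ys (k - 1))"

text \<open>Sum of the optimality conditions of the y-subproblems at steps k and k - 1, tested at each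
  other's minimizer.\<close>

lemma \<xi>_Suc_le:
  assumes psd: "psd_op (\<lambda>u. (1/2) *\<^sub>R Shg u + T u)" and "1 \<le> k"
  shows "\<xi> (Suc k) - \<xi> k
    \<le> 2 * (1 - \<tau>) * \<sigma> * (r k \<bullet> adjoint B (ys (Suc k) - ys k))
       - 2 * \<sigma> * (r (Suc k) \<bullet> adjoint B (ys (Suc k) - ys k))"
proof -
  obtain j where k: "k = Suc j"
    using assms(2) by (cases k) auto
  define G where "G = (\<lambda>u. Shg u + T u)"
  define d where "d = ys (Suc k) - ys k"
  define d' where "d' = ys k - ys j"
  have G_sa: "self_adjoint_op G"
    unfolding G_def by (rule self_adjoint_op_add[OF gy.Shf_sa T_sa])
  have vi_k: "0 \<le> real_of_ereal (q (ys k)) - real_of_ereal (q (ys (Suc k)))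
      - (gg (ys k) \<bullet> d + qf G d) - (zs k + \<sigma> *\<^sub>R r (Suc k)) \<bullet> adjoint B d"
    using y_step_vi[OF q_iterate_finite[of j, folded k], of k]
    by (simp add: G_def d_def qf_def linear_diff adjoint_linear B_lin
        inner_commute algebra_simps)
  have vi_j: "0 \<le> real_of_ereal (q (ys (Suc k))) - real_of_ereal (q (ys k))
      + gg (ys j) \<bullet> d + G d' \<bullet> d + (zs j + \<sigma> *\<^sub>R r k) \<bullet> adjoint B d"
    using y_step_vi[OF q_iterate_finite[of k], of j]
    by (simp add: G_def d_def d'_def k inner_add_left)
  have "- 1/4 * qf Shg (d - d') \<le> (gg (ys k) - gg (ys j)) \<bullet> d"
    unfolding d_def d'_def by (rule gy.grad_diff_lower)
  moreover have "0 \<le> 1/2 * qf Shg (d - d') + qf T (d - d')"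
    using psd_op_qf_nonneg[OF psd] by (simp add: qf_add_op qf_scaleR_op)
  moreover have "2 * (G d' \<bullet> d) = qf G d + qf G d' - qf G (d - d')"
    using qf_diff[OF G_sa, of d d'] self_adjoint_op_commute[OF G_sa, of d d'] by simp
  moreover have "qf G (d - d') = qf Shg (d - d') + qf T (d - d')"
    unfolding G_def by (rule qf_add_op)
  moreover have "zs k = zs j + (\<tau> * \<sigma>) *\<^sub>R r k"
    unfolding k z_step r_def ..
  moreover have "\<xi> (Suc k) = qf G d" "\<xi> k = qf G d'"
    by (simp_all add: \<xi>_def G_def d_def d'_def k)
  ultimately show ?thesis
    using vi_k vi_j unfolding d_def[symmetric]
    by (simp add: algebra_simps)
qed

definition t :: "real \<Rightarrow> nat \<Rightarrow> real" where
  "t \<alpha> k = qf (\<lambda>u. (1/2) *\<^sub>R Sf u + S u + ((1 - \<alpha>) * \<sigma> / 2) *\<^sub>R A (adjoint A u)) (xs k - xs (k - 1))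
     + qf (\<lambda>u. (1/2) *\<^sub>R Sg u + T u + (min \<tau> (1 + \<tau> - \<tau>\<^sup>2) * \<alpha> * \<sigma>) *\<^sub>R B (adjoint B u))
          (ys k - ys (k - 1))"

lemma \<xi>_Suc_residual_le:
  assumes "psd_op (\<lambda>u. (1/2) *\<^sub>R Shg u + T u)" and "1 \<le> k"
  shows "\<xi> (Suc k) - \<xi> k + \<sigma> * (norm (r (Suc k)))\<^sup>2
           - \<sigma> * (norm (adjoint A (xs (Suc k)) + adjoint B (ys k) - c))\<^sup>2
         \<le> (1 - min \<tau> (1 / \<tau>)) * \<sigma> * (norm (r k))\<^sup>2
           - min \<tau> (1 + \<tau> - \<tau>\<^sup>2) * \<sigma> * (norm (adjoint B (ys (Suc k) - ys k)))\<^sup>2"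
proof -
  define D where "D = adjoint B (ys (Suc k) - ys k)"
  have u_eq: "adjoint A (xs (Suc k)) + adjoint B (ys k) - c = r (Suc k) + (- 1) *\<^sub>R D"
    by (simp add: D_def r_def linear_diff adjoint_linear B_lin)
  have "\<sigma> * (norm (adjoint A (xs (Suc k)) + adjoint B (ys k) - c))\<^sup>2
      = \<sigma> * (norm (r (Suc k)))\<^sup>2 - 2 * \<sigma> * (r (Suc k) \<bullet> D) + \<sigma> * (norm D)\<^sup>2"
    unfolding u_eq norm_add_scaleR_power2 by (simp add: algebra_simps)
  moreover have "\<sigma> * (2 * (1 - \<tau>) * (r k \<bullet> D))
      \<le> \<sigma> * ((1 - min \<tau> (1 / \<tau>)) * (norm (r k))\<^sup>2 + (1 - min \<tau> (1 + \<tau> - \<tau>\<^sup>2)) * (norm D)\<^sup>2)"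
    using inner_cross_bound[OF tau_pos] sigma_pos by (intro mult_left_mono) auto
  ultimately show ?thesis
    using \<xi>_Suc_le[OF assms] unfolding D_def[symmetric] by (simp add: algebra_simps)
qed

lemma \<Gamma>_real_descent_refined:
  assumes "p x \<noteq> \<infinity>" and "q y \<noteq> \<infinity>" and psd: "psd_op (\<lambda>u. (1/2) *\<^sub>R Shg u + T u)"
    and "0 < \<alpha>" and "\<alpha> \<le> 1" and "1 \<le> k"
  shows "\<Gamma>_real k x y z
      + 1/2 * ((\<phi> (Suc k) x y z + (1 - \<alpha> * min \<tau> (1 / \<tau>)) * \<sigma> * (norm (r (Suc k)))\<^sup>2 + \<alpha> * \<xi> (Suc k))
               - (\<phi> k x y z + (1 - \<alpha> * min \<tau> (1 / \<tau>)) * \<sigma> * (norm (r k))\<^sup>2 + \<alpha> * \<xi> k))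
    \<le> - 1/2 * (t \<alpha> (Suc k) + (- \<tau> + \<alpha> * min (1 + \<tau>) (1 + 1 / \<tau>)) * \<sigma> * (norm (r (Suc k)))\<^sup>2)"
proof -
  let ?u = "adjoint A (xs (Suc k)) + adjoint B (ys k) - c"
  have "adjoint A (xs (Suc k) - xs k) = ?u - r k"
    by (simp add: r_def linear_diff adjoint_linear A_lin)
  then have "(norm (adjoint A (xs (Suc k) - xs k)))\<^sup>2 \<le> 2 * (norm ?u)\<^sup>2 + 2 * (norm (r k))\<^sup>2"
    by (simp add: norm_diff_power2_le)
  then have "(1 - \<alpha>) * \<sigma>
      * ((norm (adjoint A (xs (Suc k) - xs k)))\<^sup>2 - 2 * (norm ?u)\<^sup>2 - 2 * (norm (r k))\<^sup>2) \<le> 0"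
    using assms(5) sigma_pos by (intro mult_nonneg_nonpos) auto
  moreover have "\<alpha> * (\<xi> (Suc k) - \<xi> k + \<sigma> * (norm (r (Suc k)))\<^sup>2 - \<sigma> * (norm ?u)\<^sup>2
      - (1 - min \<tau> (1 / \<tau>)) * \<sigma> * (norm (r k))\<^sup>2
      + min \<tau> (1 + \<tau> - \<tau>\<^sup>2) * \<sigma> * (norm (adjoint B (ys (Suc k) - ys k)))\<^sup>2) \<le> 0"
    using \<xi>_Suc_residual_le[OF psd assms(6)] assms(4) by (intro mult_nonneg_nonpos) auto
  moreover have "t \<alpha> (Suc k) = s (Suc k)
      + (1 - \<alpha>) * \<sigma> / 2 * (norm (adjoint A (xs (Suc k) - xs k)))\<^sup>2
      + min \<tau> (1 + \<tau> - \<tau>\<^sup>2) * \<alpha> * \<sigma> * (norm (adjoint B (ys (Suc k) - ys k)))\<^sup>2"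
    by (simp add: t_def s_def qf_add_op qf_scaleR_op qf_adjoint_op A_lin B_lin)
  moreover have "min (1 + \<tau>) (1 + 1 / \<tau>) = 1 + min \<tau> (1 / \<tau>)"
    by (simp add: min_def)
  ultimately show ?thesis
    using \<Gamma>_real_descent[OF assms(1,2), of k z] by (simp add: ring_distribs) argo
qed

end

theorem proposition3p4:
  fixes p :: "'x::euclidean_space \<Rightarrow> ereal" and q :: "'y::euclidean_space \<Rightarrow> ereal"
    and f :: "'x \<Rightarrow> real" and g :: "'y \<Rightarrow> real"
    and gf :: "'x \<Rightarrow> 'x" and gg :: "'y \<Rightarrow> 'y"
    and A :: "'z::euclidean_space \<Rightarrow> 'x" and B :: "'z \<Rightarrow> 'y" and c :: 'z
    and Sf Shf S :: "'x \<Rightarrow> 'x" and Sg Shg T :: "'y \<Rightarrow> 'y"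
    and \<sigma> \<tau> :: real
    and xs :: "nat \<Rightarrow> 'x" and ys :: "nat \<Rightarrow> 'y" and zs :: "nat \<Rightarrow> 'z"
  defines "Lx \<equiv> \<lambda>k x. p x + ereal (gf (xs k) \<bullet> x + 1/2 * qf (\<lambda>u. Shf u + S u) (x - xs k)
              + zs k \<bullet> adjoint A x + \<sigma>/2 * (norm (adjoint A x + adjoint B (ys k) - c))\<^sup>2)"
  defines "Ly \<equiv> \<lambda>k y. q y + ereal (gg (ys k) \<bullet> y + 1/2 * qf (\<lambda>u. Shg u + T u) (y - ys k)
              + zs k \<bullet> adjoint B y + \<sigma>/2 * (norm (adjoint A (xs (Suc k)) + adjoint B y - c))\<^sup>2)"
  defines "r \<equiv> \<lambda>k. adjoint A (xs k) + adjoint B (ys k) - c"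
  defines "\<Gamma> \<equiv> \<lambda>k x y z. (p (xs (Suc k)) + q (ys (Suc k))) - (p x + q y)
              + ereal ((xs (Suc k) - x) \<bullet> (gf x + A z) + (ys (Suc k) - y) \<bullet> (gg y + B z)
                       + (zs k + \<sigma> *\<^sub>R r (Suc k) - z) \<bullet> (- (adjoint A x + adjoint B y - c)))"
  defines "\<phi> \<equiv> \<lambda>k x y z. 1 / (\<tau> * \<sigma>) * (norm (zs k - z))\<^sup>2 + qf (\<lambda>u. Shf u + S u) (xs k - x)
              + qf (\<lambda>u. Shg u + T u) (ys k - y) + \<sigma> * (norm (adjoint A x + adjoint B (ys k) - c))\<^sup>2"
  defines "\<xi> \<equiv> \<lambda>k. qf (\<lambda>u. Shg u + T u) (ys k - ys (k - 1))"
  defines "s \<equiv> \<lambda>k. qf (\<lambda>u. (1/2) *\<^sub>R Sf u + S u) (xs k - xs (k - 1))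
              + qf (\<lambda>u. (1/2) *\<^sub>R Sg u + T u) (ys k - ys (k - 1))"
  defines "Hf \<equiv> \<lambda>\<alpha> u. (1/2) *\<^sub>R Sf u + S u + ((1 - \<alpha>) * \<sigma> / 2) *\<^sub>R A (adjoint A u)"
  defines "Mg \<equiv> \<lambda>\<alpha> u. (1/2) *\<^sub>R Sg u + T u + (min \<tau> (1 + \<tau> - \<tau>\<^sup>2) * \<alpha> * \<sigma>) *\<^sub>R B (adjoint B u)"
  defines "t \<equiv> \<lambda>\<alpha> k. qf (Hf \<alpha>) (xs k - xs (k - 1)) + qf (Mg \<alpha>) (ys k - ys (k - 1))"
  assumes p_cpc: "closed_proper_convex p" and q_cpc: "closed_proper_convex q"
    and f_convex: "convex_on UNIV f" and g_convex: "convex_on UNIV g"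
    and f_grad: "\<And>x. (f has_derivative (\<lambda>h. gf x \<bullet> h)) (at x)"
    and g_grad: "\<And>y. (g has_derivative (\<lambda>h. gg y \<bullet> h)) (at y)"
    and gf_lip: "\<exists>L. L-lipschitz_on UNIV gf" and gg_lip: "\<exists>L. L-lipschitz_on UNIV gg"
    and A_lin: "linear A" and B_lin: "linear B"
    and Sf_sa: "self_adjoint_op Sf" and Sf_psd: "psd_op Sf"
    and Shf_sa: "self_adjoint_op Shf" and Shf_psd: "psd_op Shf"
    and Shf_ge: "psd_op (\<lambda>u. Shf u - Sf u)"
    and Sg_sa: "self_adjoint_op Sg" and Sg_psd: "psd_op Sg"
    and Shg_sa: "self_adjoint_op Shg" and Shg_psd: "psd_op Shg"
    and Shg_ge: "psd_op (\<lambda>u. Shg u - Sg u)"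
    and f_bounds: "\<And>x x'. f x' + (x - x') \<bullet> gf x' + 1/2 * qf Sf (x - x') \<le> f x
                         \<and> f x \<le> f x' + (x - x') \<bullet> gf x' + 1/2 * qf Shf (x - x')"
    and g_bounds: "\<And>y y'. g y' + (y - y') \<bullet> gg y' + 1/2 * qf Sg (y - y') \<le> g y
                         \<and> g y \<le> g y' + (y - y') \<bullet> gg y' + 1/2 * qf Shg (y - y')"
    and sigma_pos: "\<sigma> > 0" and tau_pos: "\<tau> > 0"
    and S_sa: "self_adjoint_op S" and T_sa: "self_adjoint_op T"
    and S_cond: "psd_op (\<lambda>u. Shf u + S u + \<sigma> *\<^sub>R A (adjoint A u))"
    and T_cond: "psd_op (\<lambda>u. Shg u + T u + \<sigma> *\<^sub>R B (adjoint B u))"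
    and x0_dom: "p (xs 0) \<noteq> \<infinity>" and y0_dom: "q (ys 0) \<noteq> \<infinity>"
    and x_step: "\<And>k x. Lx k (xs (Suc k)) \<le> Lx k x"
    and y_step: "\<And>k y. Ly k (ys (Suc k)) \<le> Ly k y"
    and z_step: "\<And>k. zs (Suc k) = zs k + (\<tau> * \<sigma>) *\<^sub>R (adjoint A (xs (Suc k)) + adjoint B (ys (Suc k)) - c)"
  shows "(\<forall>k x y z. \<Gamma> k x y z + ereal (1/2 * (\<phi> (Suc k) x y z - \<phi> k x y z))
            \<le> ereal (- 1/2 * (s (Suc k) + (1 - \<tau>) * \<sigma> * (norm (r (Suc k)))\<^sup>2
                 + \<sigma> * (norm (adjoint A (xs (Suc k)) + adjoint B (ys k) - c))\<^sup>2)))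
       \<and> (psd_op (\<lambda>u. (1/2) *\<^sub>R Shg u + T u) \<longrightarrow>
          (\<forall>\<alpha> k x y z. 0 < \<alpha> \<and> \<alpha> \<le> 1 \<and> 1 \<le> k \<longrightarrow>
            (let \<kappa> = 1 - \<alpha> * min \<tau> (1 / \<tau>) in
             \<Gamma> k x y z + ereal (1/2 * ((\<phi> (Suc k) x y z + \<kappa> * \<sigma> * (norm (r (Suc k)))\<^sup>2 + \<alpha> * \<xi> (Suc k))
                                    - (\<phi> k x y z + \<kappa> * \<sigma> * (norm (r k))\<^sup>2 + \<alpha> * \<xi> k)))
             \<le> ereal (- 1/2 * (t \<alpha> (Suc k)
                   + (- \<tau> + \<alpha> * min (1 + \<tau>) (1 + 1 / \<tau>)) * \<sigma> * (norm (r (Suc k)))\<^sup>2)))))"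
proof -
  interpret M: majorized_ipadmm f gf Sf Shf g gg Sg Shg p q A B c S T \<sigma> \<tau> xs ys zs
    by (intro majorized_ipadmm.intro majorized_fun.intro majorized_ipadmm_axioms.intro)
      (fact x_step[unfolded Lx_def] y_step[unfolded Ly_def] assms)+
  have "r = M.r"
    by (simp add: fun_eq_iff r_def M.r_def)
  then have "\<Gamma> = M.\<Gamma>" "\<phi> = M.\<phi>" "\<xi> = M.\<xi>" "s = M.s" "t = M.t"
    by (simp_all add: fun_eq_iff \<Gamma>_def M.\<Gamma>_def \<phi>_def M.\<phi>_def \<xi>_def M.\<xi>_def s_def M.s_def
        t_def M.t_def Hf_def Mg_def)
  then show ?thesis
    unfolding \<open>r = M.r\<close> Let_def
    using M.\<Gamma>_real_descent M.\<Gamma>_real_descent_refined by (blast intro: M.\<Gamma>_le_ereal)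
qed

end
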